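(* Let $K$ be an infinite, algebraically closed, totally ordered quasi-field of characteristic $1$. The natural map from $K\{X_1,\dots,X_n\}$ to the quasi-ring of polynomial functions $K^n\to K$, sending the class of $P$ to $x\mapsto P(x)$, is well defined and is an isomorphism of quasi-rings.
   Context: A quasi-field of characteristic $1$ is a commutative semiring $K$ with $1+1=1$ in which every nonzero element is multiplicatively invertible; ordered by $u\le v$ iff $u+v=v$, totally ordered meaning the order is total. $K$ is algebraically closed if every nonconstant polynomial of $K[X]$ has a root in $K$ (a point where it vanishes or where the maximum of the values of its monomials is attained at least twice). $K\{X_1,\dots,X_n\}$ is the image of $K[X_1,\dots,X_n]$ in its quasi-field of fractions, i.e. the quotient by $P\sim Q$ iff $RP=RQ$ for some nonzero $R$ (rational polynomials). Polynomial functions form a quasi-ring under pointwise addition ($\max$) and multiplication. *)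

theory Defs
  imports "HOL-Library.Poly_Mapping" "HOL-Computational_Algebra.Polynomial"
begin

definition qle :: "'a::plus \<Rightarrow> 'a \<Rightarrow> bool" where
  "qle u v \<longleftrightarrow> u + v = v"

definition quasi_field_char1 :: "'a::comm_semiring_1 itself \<Rightarrow> bool" where
  "quasi_field_char1 _ \<longleftrightarrow> (1 + 1 = (1::'a)) \<and> (\<forall>x::'a. x \<noteq> 0 \<longrightarrow> (\<exists>y. x * y = 1))"

definition totally_ordered_qf :: "'a::plus itself \<Rightarrow> bool" where
  "totally_ordered_qf _ \<longleftrightarrow> (\<forall>u v::'a. qle u v \<or> qle v u)"

definition is_qroot :: "'a::comm_semiring_1 poly \<Rightarrow> 'a \<Rightarrow> bool" where
  "is_qroot p x \<longleftrightarrow> poly p x = 0 \<or>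
     (\<exists>i j. i \<noteq> j \<and> i \<le> degree p \<and> j \<le> degree p \<and> coeff p i \<noteq> 0 \<and> coeff p j \<noteq> 0 \<and>
        (\<forall>k \<le> degree p. coeff p k \<noteq> 0 \<longrightarrow>
            qle (coeff p k * x ^ k) (coeff p i * x ^ i) \<and> qle (coeff p k * x ^ k) (coeff p j * x ^ j)))"

definition alg_closed_qf :: "'a::comm_semiring_1 itself \<Rightarrow> bool" where
  "alg_closed_qf _ \<longleftrightarrow> (\<forall>p :: 'a poly. degree p > 0 \<longrightarrow> (\<exists>x. is_qroot p x))"

text \<open>Polynomials in the variables indexed by the finite type 'n: finitely supported maps
  from monomials (exponent vectors) to coefficients. Evaluation at a point of K^n.\<close>
definition mpeval :: "(('n::finite \<Rightarrow>\<^sub>0 nat) \<Rightarrow>\<^sub>0 'a::comm_semiring_1) \<Rightarrow> ('n \<Rightarrow> 'a) \<Rightarrow> 'a" where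
  "mpeval P x = (\<Sum>m\<in>Poly_Mapping.keys P. Poly_Mapping.lookup P m * (\<Prod>i\<in>(UNIV::'n set). x i ^ Poly_Mapping.lookup (m::'n \<Rightarrow>\<^sub>0 nat) i))"

text \<open>The congruence defining K{X}: P ~ Q iff R P = R Q for some nonzero R.\<close>
definition rat_equiv :: "(('n \<Rightarrow>\<^sub>0 nat) \<Rightarrow>\<^sub>0 'a::comm_semiring_1) \<Rightarrow> (('n \<Rightarrow>\<^sub>0 nat) \<Rightarrow>\<^sub>0 'a) \<Rightarrow> bool" where
  "rat_equiv P Q \<longleftrightarrow> (\<exists>R. R \<noteq> 0 \<and> R * P = R * Q)"

end

theory Submission
  imports Defs
begin

(* Well-definedness: R P = R Q with
   R <> 0 gives P = Q on the torus (all coordinates nonzero), where R does not vanish and K is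
   cancellative; and a polynomial inequality valid on the torus holds everywhere, by moving
   the zero coordinates to a small nonzero value (this uses that K is infinite).
   Injectivity: if P and Q define the same function, then every term c X^a of Q is dominated
   by P on the torus.  Eliminating the variables one by one with the one-variable
   (Newton polygon) domination lemma and n-th roots from algebraic closedness, some power of
   c X^a lies coefficientwise below the same power of P; the freshman's binomial in an
   idempotent semiring then gives (P + c X^a)^N = (P + c X^a)^(N-1) P, i.e. P + c X^a ~ P.
   Absorbing all terms yields P ~ P + Q = Q + P ~ Q. *)

section \<open>Idempotent semirings\<close>

locale idempotent_semiring =
  fixes K :: "'a::comm_semiring_1 itself"
  assumes one_plus_one: "(1::'a) + 1 = 1"
begin

lemma add_idem: "(x::'a) + x = x"
proof -
  have "x + x = x * (1 + 1)" by (metis distrib_left mult.right_neutral)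
  thus ?thesis using one_plus_one by simp
qed

lemma qle_refl: "qle (x::'a) x"
  by (simp add: qle_def add_idem)

lemma qle_trans [trans]: "qle (u::'a) v \<Longrightarrow> qle v w \<Longrightarrow> qle u w"
  unfolding qle_def by (metis add.assoc)

lemma qle_antisym: "qle (u::'a) v \<Longrightarrow> qle v u \<Longrightarrow> u = v"
  unfolding qle_def by (metis add.commute)

lemma qle_addL: "qle (u::'a) (u + v)"
  unfolding qle_def by (metis add.assoc add_idem)

lemma qle_addR: "qle (v::'a) (u + v)"
  unfolding qle_def by (metis add.commute add.left_commute add_idem)

lemma qle_add_bound: "qle (u::'a) w \<Longrightarrow> qle v w \<Longrightarrow> qle (u + v) w"
  unfolding qle_def by (metis add.assoc)

lemma qle_add_mono: "qle (u::'a) u' \<Longrightarrow> qle v v' \<Longrightarrow> qle (u + v) (u' + v')"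
  by (meson qle_add_bound qle_addL qle_addR qle_trans)

lemma qle_zero: "qle 0 (u::'a)"
  by (simp add: qle_def)

lemma qle_0_iff: "qle (u::'a) 0 \<longleftrightarrow> u = 0"
  by (simp add: qle_def)

lemma qle_mult: "qle (u::'a) v \<Longrightarrow> qle (u * w) (v * w)"
  unfolding qle_def by (metis distrib_right)

lemma qle_mult2: "qle (u::'a) v \<Longrightarrow> qle u' v' \<Longrightarrow> qle (u * u') (v * v')"
  by (metis mult.commute qle_mult qle_trans)

lemma qle_power: "qle (u::'a) v \<Longrightarrow> qle (u ^ n) (v ^ n)"
  by (induction n) (auto simp: qle_refl intro: qle_mult2)

lemma qle_sum_bound:
  "finite S \<Longrightarrow> (\<And>s. s \<in> S \<Longrightarrow> qle (f s) (w::'a)) \<Longrightarrow> qle (sum f S) w"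
  by (induction S rule: finite_induct) (auto simp: qle_zero intro: qle_add_bound)

lemma qle_sum_member: "finite S \<Longrightarrow> s \<in> S \<Longrightarrow> qle (f s) (sum f S :: 'a)"
  by (metis qle_addL qle_addR sum.remove)

lemma qle_prod_mono:
  "(\<And>s. s \<in> S \<Longrightarrow> qle (f s) (g s)) \<Longrightarrow> qle (prod f S) (prod g S :: 'a)"
  by (induction S rule: infinite_finite_induct) (auto simp: qle_refl intro: qle_mult2)

text \<open>The ``freshman's binomial'' \<open>(P + M)\<^sup>k\<^sup>+\<^sup>1 = P (P + M)\<^sup>k + M\<^sup>k\<^sup>+\<^sup>1\<close>: in an idempotent
  semiring all mixed terms are absorbed by the terms containing \<open>P\<close>.\<close>

lemma binomial_absorb: "(P + M) ^ Suc k = P * (P + M) ^ k + (M::'a) ^ Suc k"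
proof (rule qle_antisym)
  show "qle ((P + M) ^ Suc k) (P * (P + M) ^ k + M ^ Suc k)"
  proof (induction k)
    case 0 then show ?case by (simp add: qle_refl)
  next
    case (Suc k)
    have a: "qle (M * (P + M) ^ k) ((P + M) ^ Suc k)"
      by (simp add: qle_mult qle_addR)
    have "(P + M) ^ Suc (Suc k) = P * (P + M) ^ Suc k + M * (P + M) ^ Suc k"
      by (simp add: distrib_right)
    also have "qle \<dots> (P * (P + M) ^ Suc k + M * (P * (P + M) ^ k + M ^ Suc k))"
      by (intro qle_add_mono qle_refl) (metis Suc mult.commute qle_mult)
    also have "\<dots> = P * (P + M) ^ Suc k + P * (M * (P + M) ^ k) + M ^ Suc (Suc k)"
      by (simp add: distrib_left algebra_simps)
    also have "qle \<dots> (P * (P + M) ^ Suc k + M ^ Suc (Suc k))"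
      by (intro qle_add_mono qle_add_bound qle_refl) (metis a mult.commute qle_mult)
    finally show ?case .
  qed
  show "qle (P * (P + M) ^ k + M ^ Suc k) ((P + M) ^ Suc k)"
    by (intro qle_add_bound)
      (simp_all add: qle_mult qle_addL, metis power_Suc qle_addR qle_power)
qed

text \<open>This is how a pointwise domination of polynomials becomes an identity in \<open>K{X}\<close>.\<close>

lemma power_absorb:
  assumes "qle (M ^ Suc k) (P ^ Suc k)"
  shows "(P + M) ^ k * (P + M) = (P + M) ^ k * (P::'a)"
proof -
  have "qle (P ^ Suc k) (P * (P + M) ^ k)"
    by (simp add: qle_mult2 qle_refl qle_power qle_addL)
  hence "qle (M ^ Suc k) (P * (P + M) ^ k)" using assms qle_trans by blast
  hence "P * (P + M) ^ k + M ^ Suc k = P * (P + M) ^ k" by (simp add: qle_def add.commute)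
  thus ?thesis using binomial_absorb[of P M k] by (simp add: mult.commute)
qed

end

abbreviation lookup :: "('b \<Rightarrow>\<^sub>0 'c::zero) \<Rightarrow> 'b \<Rightarrow> 'c" where
  "lookup \<equiv> Poly_Mapping.lookup"

abbreviation keys :: "('b \<Rightarrow>\<^sub>0 'c::zero) \<Rightarrow> 'b set" where
  "keys \<equiv> Poly_Mapping.keys"

abbreviation single :: "'b \<Rightarrow> 'c::zero \<Rightarrow> 'b \<Rightarrow>\<^sub>0 'c" where
  "single \<equiv> Poly_Mapping.single"

context idempotent_semiring begin

lemma poly_mapping_idempotent: "idempotent_semiring TYPE('m::comm_monoid_add \<Rightarrow>\<^sub>0 'a)"
  by unfold_locales (metis single_one single_add one_plus_one)

lemma single_qle_poly:
  "qle (single m (lookup P m)) (P :: 'm \<Rightarrow>\<^sub>0 'a)"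
  unfolding qle_def
  by (rule poly_mapping_eqI) (simp add: lookup_add lookup_single add_idem when_def)

lemma single_qle_single:
  "qle c d \<Longrightarrow> qle (single m c) (single m (d::'a))"
  unfolding qle_def by (simp flip: single_add)

end

section \<open>Totally ordered quasi-fields of characteristic 1\<close>

locale ordered_quasi_field = idempotent_semiring K for K :: "'a::comm_semiring_1 itself" +
  assumes inverse_exists: "\<And>x::'a. x \<noteq> 0 \<Longrightarrow> \<exists>y. x * y = 1"
    and qle_total: "\<And>u v::'a. qle u v \<or> qle v u"
begin

definition qlt :: "'a \<Rightarrow> 'a \<Rightarrow> bool" where
  "qlt u v \<longleftrightarrow> qle u v \<and> u \<noteq> v"

lemma qlt_not_qle: "qlt u v \<longleftrightarrow> \<not> qle v u"
  using qle_antisym qle_refl qle_total unfolding qlt_def by blast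

lemma qlt_imp_qle: "qlt u v \<Longrightarrow> qle u v"
  by (simp add: qlt_def)

lemma qlt_qle_trans: "qlt u v \<Longrightarrow> qle v w \<Longrightarrow> qlt u w"
  by (meson qle_trans qlt_not_qle)

lemma qle_qlt_trans: "qle u v \<Longrightarrow> qlt v w \<Longrightarrow> qlt u w"
  by (meson qle_trans qlt_not_qle)

lemma zero_qlt: "x \<noteq> 0 \<Longrightarrow> qlt 0 (x::'a)"
  by (simp add: qlt_def qle_zero)

lemma add_cases: "u + v = u \<or> u + v = (v::'a)"
  using qle_total[of u v] unfolding qle_def by (auto simp: add.commute)

lemma qle_add_iff: "qle (w::'a) (u + v) \<longleftrightarrow> qle w u \<or> qle w v"
  using add_cases[of u v] qle_addL[of u v] qle_addR[of v u] qle_trans by metis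

lemma add_eq_0_iff: "(u::'a) + v = 0 \<longleftrightarrow> u = 0 \<and> v = 0"
  using add_cases[of u v] by auto

lemma mult_eq_0_iff: "(u::'a) * v = 0 \<longleftrightarrow> u = 0 \<or> v = 0"
proof
  assume h: "u * v = 0"
  show "u = 0 \<or> v = 0"
  proof (rule ccontr)
    assume nz: "\<not> (u = 0 \<or> v = 0)"
    then obtain y where "u * y = 1" using inverse_exists by blast
    hence "v = y * (u * v)" by (simp add: mult.assoc[symmetric] mult.commute[of y u])
    thus False using h nz by simp
  qed
qed auto

lemma power_nonzero: "(u::'a) \<noteq> 0 \<Longrightarrow> u ^ n \<noteq> 0"
  by (induction n) (auto simp: mult_eq_0_iff)

lemma mult_right_cancel: "(w::'a) \<noteq> 0 \<Longrightarrow> u * w = v * w \<Longrightarrow> u = v"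
  by (metis inverse_exists mult.assoc mult_1_right)

lemma qle_mult_iff: "(w::'a) \<noteq> 0 \<Longrightarrow> qle (u * w) (v * w) \<longleftrightarrow> qle u v"
proof
  assume w: "w \<noteq> 0" and le: "qle (u * w) (v * w)"
  obtain y where y: "w * y = 1" using inverse_exists w by blast
  have "qle (u * w * y) (v * w * y)" using le by (rule qle_mult)
  thus "qle u v" using y by (simp add: mult.assoc)
qed (rule qle_mult)

lemma qlt_mult_iff: "(w::'a) \<noteq> 0 \<Longrightarrow> qlt (u * w) (v * w) \<longleftrightarrow> qlt u v"
  by (simp add: qlt_not_qle qle_mult_iff)

lemma qlt_mult2: "qlt u v \<Longrightarrow> qle u' v' \<Longrightarrow> u' \<noteq> 0 \<Longrightarrow> qlt (u * u') (v * v')"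
  by (metis qle_mult mult.commute qlt_mult_iff qlt_qle_trans)

lemma qlt_power: "qlt u v \<Longrightarrow> n > 0 \<Longrightarrow> qlt (u ^ n) ((v::'a) ^ n)"
proof (induction n)
  case (Suc n)
  show ?case
  proof (cases "n = 0 \<or> u = 0")
    case True
    have "v \<noteq> 0" using Suc.prems qle_0_iff qlt_def by auto
    then show ?thesis
      using True Suc.prems power_nonzero[of v "Suc n"] by (auto simp: zero_qlt)
  next
    case False
    hence "qlt (u ^ n * u) (v ^ n * v)"
      using Suc qlt_mult2[OF _ qlt_imp_qle[OF Suc.prems(1)]] by simp
    thus ?thesis by (simp add: mult.commute)
  qed
qed simp

lemma qle_sum_witness:
  "finite S \<Longrightarrow> (w::'a) \<noteq> 0 \<Longrightarrow> qle w (sum f S) \<Longrightarrow> \<exists>s\<in>S. qle w (f s)"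
  by (induction S rule: finite_induct) (auto simp: qle_0_iff qle_add_iff)

lemma qlt_sum:
  "finite S \<Longrightarrow> (w::'a) \<noteq> 0 \<Longrightarrow> (\<And>s. s \<in> S \<Longrightarrow> qlt (f s) w) \<Longrightarrow> qlt (sum f S) w"
  by (meson qle_sum_witness qlt_not_qle)

lemma sum_nonzero: "finite S \<Longrightarrow> s \<in> S \<Longrightarrow> f s \<noteq> 0 \<Longrightarrow> sum f S \<noteq> (0::'a)"
  by (metis qle_sum_member qle_0_iff)

lemma prod_nonzero: "finite S \<Longrightarrow> (\<And>s. s \<in> S \<Longrightarrow> f s \<noteq> 0) \<Longrightarrow> prod f S \<noteq> (0::'a)"
  by (induction S rule: finite_induct) (auto simp: mult_eq_0_iff)

lemma finite_qmax:
  "finite S \<Longrightarrow> S \<noteq> {} \<Longrightarrow> \<exists>s\<in>S. \<forall>s'\<in>S. qle (f s') (f s :: 'a)"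
proof (induction S rule: finite_ne_induct)
  case (insert x F)
  then obtain s where s: "s \<in> F" "\<forall>s'\<in>F. qle (f s') (f s)" by blast
  show ?case
    using qle_total[of "f x" "f s"] s qle_trans[of _ "f s" "f x"] qle_refl by auto
qed (simp add: qle_refl)

lemma finite_qmin:
  "finite S \<Longrightarrow> S \<noteq> {} \<Longrightarrow> \<exists>s\<in>S. \<forall>s'\<in>S. qle (f s :: 'a) (f s')"
proof (induction S rule: finite_ne_induct)
  case (insert x F)
  then obtain s where s: "s \<in> F" "\<forall>s'\<in>F. qle (f s) (f s')" by blast
  show ?case
    using qle_total[of "f x" "f s"] s qle_trans[of "f x" "f s"] qle_refl by auto
qed (simp add: qle_refl)

end

section \<open>Infinite algebraically closed ordered quasi-fields\<close>

locale closed_quasi_field = ordered_quasi_field K for K :: "'a::comm_semiring_1 itself" +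
  assumes infinite_carrier: "infinite (UNIV :: 'a set)"
    and algebraically_closed: "alg_closed_qf K"
begin

text \<open>Algebraic closedness gives \<open>n\<close>-th roots: a root of \<open>X\<^sup>n + g\<close> must make the two
  monomials \<open>x\<^sup>n\<close> and \<open>g\<close> equal (it cannot be a zero, as \<open>g \<noteq> 0\<close>).\<close>

lemma nth_root_exists:
  assumes g: "(g::'a) \<noteq> 0" and n: "n > 0"
  shows "\<exists>r. r ^ n = g"
proof -
  define p :: "'a poly" where "p = monom 1 n + [:g:]"
  have cf: "coeff p k = (if k = n then 1 else 0) + (if k = 0 then g else 0)" for k
    by (simp add: p_def coeff_monom pCons_one coeff_pCons split: nat.split)
  have dg: "degree p = n"
    unfolding p_def using n by (subst degree_add_eq_left) (simp_all add: degree_monom_eq)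
  obtain x where x: "is_qroot p x"
    using algebraically_closed dg n unfolding alg_closed_qf_def by auto
  have c0: "coeff p 0 = g" and cn: "coeff p n = 1" using cf n by simp_all
  have "poly p x = x ^ n + g" by (simp add: p_def poly_monom)
  hence "poly p x \<noteq> 0" using add_eq_0_iff g by auto
  then obtain i j where ij: "i \<noteq> j" "coeff p i \<noteq> 0" "coeff p j \<noteq> 0"
    and all: "\<forall>k\<le>n. coeff p k \<noteq> 0 \<longrightarrow> qle (coeff p k * x ^ k) (coeff p i * x ^ i) \<and>
                                        qle (coeff p k * x ^ k) (coeff p j * x ^ j)"
    using x unfolding is_qroot_def dg by blast
  have "{i, j} = {0, n}" using ij cf by (auto split: if_splits)
  hence "qle (x ^ n) g \<and> qle g (x ^ n)"
    using all[rule_format, of n] all[rule_format, of 0] c0 cn g by (auto simp: doubleton_eq_iff)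
  thus ?thesis using qle_antisym by blast
qed

text \<open>Equations \<open>r\<^sup>k w = v\<close> with \<open>v, w \<noteq> 0\<close> are solvable: take a \<open>k\<close>-th root of \<open>v w\<^sup>-\<^sup>1\<close>.\<close>

lemma scaled_root_exists:
  assumes w: "(w::'a) \<noteq> 0" and v: "v \<noteq> 0" and k: "k > 0"
  shows "\<exists>r. r ^ k * w = v"
proof -
  obtain wi where wi: "w * wi = 1" using inverse_exists w by blast
  have "v * wi \<noteq> 0" using v wi by (auto simp: mult_eq_0_iff)
  then obtain r where "r ^ k = v * wi" using nth_root_exists k by blast
  hence "r ^ k * w = v * (w * wi)" by (simp add: ac_simps)
  thus ?thesis using wi by auto
qed

lemma exists_qlt_one: "\<exists>s::'a. s \<noteq> 0 \<and> qlt s 1"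
proof -
  have "\<not> UNIV \<subseteq> {0::'a, 1}" using infinite_carrier finite_subset by auto
  then obtain g :: 'a where g: "g \<noteq> 0" "g \<noteq> 1" by blast
  show ?thesis
  proof (cases "qle g 1")
    case True then show ?thesis using g by (auto simp: qlt_def)
  next
    case False
    obtain h where h: "g * h = 1" using inverse_exists g by blast
    hence "h \<noteq> 0" by auto
    hence "qlt (1 * h) (g * h)" using False qlt_mult_iff qlt_not_qle by blast
    thus ?thesis using h \<open>h \<noteq> 0\<close> by auto
  qed
qed

text \<open>Scaling the element of \<open>exists_qlt_one\<close> gives elements below and above any given one.\<close>

lemma exists_qlt_below: "u \<noteq> 0 \<Longrightarrow> \<exists>t::'a. t \<noteq> 0 \<and> qlt t u"
  by (metis exists_qlt_one mult_1 mult_eq_0_iff qlt_mult_iff)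

lemma exists_qlt_above: "\<exists>t::'a. t \<noteq> 0 \<and> qlt u t"
proof -
  obtain s where s: "s \<noteq> 0" "qlt s 1" using exists_qlt_one by blast
  obtain y where y: "s * y = 1" using inverse_exists s by blast
  have y0: "y \<noteq> 0" using y by auto
  have u1: "u + 1 \<noteq> 0" by (simp add: add_eq_0_iff)
  have "qlt (s * (u + 1) * y) (1 * (u + 1) * y)"
    using s y0 u1 by (metis mult_eq_0_iff qlt_mult_iff)
  moreover have "s * (u + 1) * y = (s * y) * (u + 1)" by (simp add: ac_simps)
  ultimately have "qlt (u + 1) ((u + 1) * y)" using y by simp
  moreover have "(u + 1) * y \<noteq> 0" using y0 u1 by (simp add: mult_eq_0_iff)
  ultimately show ?thesis using qle_addL qle_qlt_trans by blast
qed

text \<open>Between two elements lies their geometric mean, a square root of \<open>l u\<close>.\<close>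

lemma exists_qlt_between: "qlt l u \<Longrightarrow> \<exists>t::'a. t \<noteq> 0 \<and> qlt l t \<and> qlt t u"
proof (cases "l = 0")
  case True
  assume "qlt l u"
  hence "u \<noteq> 0" using True qlt_def by auto
  then obtain t where "t \<noteq> 0" "qlt t u" using exists_qlt_below by blast
  thus ?thesis using True by (auto simp: zero_qlt)
next
  case False
  assume h: "qlt l u"
  have u0: "u \<noteq> 0" using h qle_0_iff qlt_def by auto
  have lu: "l * u \<noteq> 0" using False u0 by (simp add: mult_eq_0_iff)
  obtain r where r: "r ^ 2 = l * u" using nth_root_exists[OF lu, of 2] by auto
  have "qlt (l * l) (u * l)" using h False qlt_mult_iff by blast
  hence "qlt (l ^ 2) (r ^ 2)" using r by (simp add: power2_eq_square mult.commute)
  hence lr: "qlt l r" using qle_power[of r l 2] qlt_not_qle by blast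
  have "qlt (l * u) (u * u)" using h u0 qlt_mult_iff by blast
  hence "qlt (r ^ 2) (u ^ 2)" using r by (simp add: power2_eq_square)
  hence "qlt r u" using qle_power[of u r 2] qlt_not_qle by blast
  moreover have "r \<noteq> 0" using r lu by (auto simp: power2_eq_square)
  ultimately show ?thesis using lr by blast
qed

lemma separating_point:
  assumes fin: "finite Lo" "finite Up"
    and up0: "\<And>s. s \<in> Up \<Longrightarrow> u s \<noteq> 0"
    and lu: "\<And>s s'. s \<in> Lo \<Longrightarrow> s' \<in> Up \<Longrightarrow> qlt (l s) (u s')"
  obtains t :: 'a where "t \<noteq> 0" "\<And>s. s \<in> Lo \<Longrightarrow> qlt (l s) t" "\<And>s. s \<in> Up \<Longrightarrow> qlt t (u s)"
proof (cases "Lo = {}"; cases "Up = {}")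
  assume "Lo = {}" "Up = {}"
  thus ?thesis using that[of 1] by auto
next
  assume "Lo = {}" "Up \<noteq> {}"
  obtain m where m: "m \<in> Up" "\<forall>s\<in>Up. qle (u m) (u s)" using finite_qmin[OF fin(2) \<open>Up \<noteq> {}\<close>] by blast
  obtain t where "t \<noteq> 0" "qlt t (u m)" using exists_qlt_below up0 m by blast
  thus ?thesis using that[of t] \<open>Lo = {}\<close> m qlt_qle_trans by blast
next
  assume "Lo \<noteq> {}" "Up = {}"
  obtain M where M: "M \<in> Lo" "\<forall>s\<in>Lo. qle (l s) (l M)" using finite_qmax[OF fin(1) \<open>Lo \<noteq> {}\<close>] by blast
  obtain t where "t \<noteq> 0" "qlt (l M) t" using exists_qlt_above by blast
  thus ?thesis using that[of t] \<open>Up = {}\<close> M qle_qlt_trans by blast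
next
  assume "Lo \<noteq> {}" "Up \<noteq> {}"
  obtain M where M: "M \<in> Lo" "\<forall>s\<in>Lo. qle (l s) (l M)" using finite_qmax[OF fin(1) \<open>Lo \<noteq> {}\<close>] by blast
  obtain m where m: "m \<in> Up" "\<forall>s\<in>Up. qle (u m) (u s)" using finite_qmin[OF fin(2) \<open>Up \<noteq> {}\<close>] by blast
  obtain t where "t \<noteq> 0" "qlt (l M) t" "qlt t (u m)" using exists_qlt_between lu M m by blast
  thus ?thesis using that[of t] M m qlt_qle_trans qle_qlt_trans by blast
qed

end

section \<open>Domination of a monomial by a one-variable polynomial\<close>

context closed_quasi_field begin

lemma term_below_threshold_low:
  assumes "e < a" "l ^ (a - e) * c = d" "qlt l t" "c \<noteq> 0" "(t::'a) \<noteq> 0"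
  shows "qlt (d * t ^ e) (c * t ^ a)"
proof -
  have "qlt (l ^ (a - e)) (t ^ (a - e))" using qlt_power assms(1,3) by simp
  hence "qlt (l ^ (a - e) * (c * t ^ e)) (t ^ (a - e) * (c * t ^ e))"
    using qlt_mult_iff[of "c * t ^ e"] assms(4,5) by (simp add: power_nonzero mult_eq_0_iff)
  moreover have "l ^ (a - e) * (c * t ^ e) = d * t ^ e"
    using assms(2) by (simp add: mult.assoc[symmetric])
  moreover have "t ^ (a - e) * (c * t ^ e) = c * t ^ a"
    using assms(1) by (simp add: mult.left_commute flip: power_add)
  ultimately show ?thesis by simp
qed

lemma term_below_threshold_high:
  assumes "a < e" "u ^ (e - a) * d = c" "qlt t u" "d \<noteq> 0" "(t::'a) \<noteq> 0"
  shows "qlt (d * t ^ e) (c * t ^ a)"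
proof -
  have "qlt (t ^ (e - a)) (u ^ (e - a))" using qlt_power assms(1,3) by simp
  hence "qlt (t ^ (e - a) * (d * t ^ a)) (u ^ (e - a) * (d * t ^ a))"
    using qlt_mult_iff[of "d * t ^ a"] assms(4,5) by (simp add: power_nonzero mult_eq_0_iff)
  moreover have "u ^ (e - a) * (d * t ^ a) = c * t ^ a"
    using assms(2) by (simp add: mult.assoc[symmetric])
  moreover have "t ^ (e - a) * (d * t ^ a) = d * t ^ e"
    using assms(1) by (simp add: mult.left_commute flip: power_add)
  ultimately show ?thesis by simp
qed

lemma thresholds_ordered:
  assumes l: "l ^ p * c = d" and u: "u ^ q * d' = c"
    and gap: "qlt (d ^ q * d' ^ p) ((c::'a) ^ (p + q))"
  shows "qlt l u"
proof (rule ccontr)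
  assume "\<not> qlt l u"
  hence "qle ((u ^ q) ^ p) ((l ^ p) ^ q)"
    using qle_power[of u l "p * q"] qlt_not_qle by (simp add: power_mult[symmetric] mult.commute)
  hence "qle ((u ^ q) ^ p * (d' ^ p * c ^ q)) ((l ^ p) ^ q * (d' ^ p * c ^ q))"
    by (rule qle_mult)
  hence "qle ((u ^ q * d') ^ p * c ^ q) ((l ^ p * c) ^ q * d' ^ p)"
    by (simp add: power_mult_distrib ac_simps)
  hence "qle (c ^ (p + q)) (d ^ q * d' ^ p)"
    using l u by (simp add: power_add mult.commute)
  thus False using gap qlt_not_qle by blast
qed

text \<open>One-variable domination (a Newton-polygon argument): if \<open>c t\<^sup>a \<le> \<Sum>\<^sub>s d\<^sub>s t\<^bsup>e\<^sub>s\<^esup>\<close> for all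
  \<open>t \<noteq> 0\<close>, then either a term of exponent \<open>a\<close> has coefficient \<open>\<ge> c\<close>, or two terms with exponents
  on both sides of \<open>a\<close> dominate \<open>c t\<^sup>a\<close> after interpolation.  Otherwise the thresholds of all
  terms are separated by some \<open>t\<close>, at which every term is strictly below \<open>c t\<^sup>a\<close>.\<close>

lemma one_variable_domination:
  assumes S: "finite S" and c: "(c::'a) \<noteq> 0"
    and H: "\<And>t. t \<noteq> 0 \<Longrightarrow> qle (c * t ^ a) (\<Sum>s\<in>S. d s * t ^ e s)"
  shows "(\<exists>s\<in>S. e s = a \<and> qle c (d s)) \<or>
         (\<exists>s\<in>S. \<exists>s'\<in>S. e s < a \<and> a < e s' \<and>
            qle (c ^ (e s' - e s)) (d s ^ (e s' - a) * d s' ^ (a - e s)))"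
proof (rule ccontr)
  assume "\<not> ?thesis"
  hence same: "\<And>s. s \<in> S \<Longrightarrow> e s = a \<Longrightarrow> qlt (d s) c"
    and gap: "\<And>s s'. s \<in> S \<Longrightarrow> s' \<in> S \<Longrightarrow> e s < a \<Longrightarrow> a < e s' \<Longrightarrow>
               qlt (d s ^ (e s' - a) * d s' ^ (a - e s)) (c ^ (e s' - e s))"
    using qlt_not_qle by blast+
  define Lo where "Lo = {s\<in>S. e s < a \<and> d s \<noteq> 0}"
  define Up where "Up = {s\<in>S. a < e s \<and> d s \<noteq> 0}"
  define l where "l s = (SOME r. r ^ (a - e s) * c = d s)" for s
  define u where "u s = (SOME r. r ^ (e s - a) * d s = c)" for s
  have l: "l s ^ (a - e s) * c = d s" if s: "s \<in> Lo" for s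
    unfolding l_def using scaled_root_exists[OF c, of "d s" "a - e s"] s
    by (auto simp: Lo_def intro: someI_ex)
  have u: "u s ^ (e s - a) * d s = c" if s: "s \<in> Up" for s
    unfolding u_def using scaled_root_exists[OF _ c, of "d s" "e s - a"] s
    by (auto simp: Up_def intro: someI_ex)
  have u0: "u s \<noteq> 0" if "s \<in> Up" for s
    using u[OF that] c that by (auto simp: Up_def zero_power)
  have lu: "qlt (l s) (u s')" if s: "s \<in> Lo" and s': "s' \<in> Up" for s s'
  proof (rule thresholds_ordered[OF l[OF s] u[OF s']])
    show "qlt (d s ^ (e s' - a) * d s' ^ (a - e s)) (c ^ (a - e s + (e s' - a)))"
      using gap s s' unfolding Lo_def Up_def by auto
  qed
  obtain t where t0: "t \<noteq> 0" and tl: "\<And>s. s \<in> Lo \<Longrightarrow> qlt (l s) t"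
    and tu: "\<And>s. s \<in> Up \<Longrightarrow> qlt t (u s)"
  proof (rule separating_point[of Lo Up u l])
    show "finite Lo" "finite Up" using S by (simp_all add: Lo_def Up_def)
  qed (use u0 lu in auto)
  have ct: "c * t ^ a \<noteq> 0" using c t0 by (simp add: mult_eq_0_iff power_nonzero)
  have each: "qlt (d s * t ^ e s) (c * t ^ a)" if s: "s \<in> S" for s
  proof -
    consider "d s = 0" | "d s \<noteq> 0" "e s = a" | "d s \<noteq> 0" "e s < a" | "d s \<noteq> 0" "a < e s"
      using less_linear by blast
    then show ?thesis
    proof cases
      case 1 then show ?thesis using ct zero_qlt by simp
    next
      case 2 then show ?thesis using same[OF s] qlt_mult_iff[OF power_nonzero[OF t0]] by simp
    next
      case 3
      hence sLo: "s \<in> Lo" using s Lo_def by auto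
      show ?thesis by (rule term_below_threshold_low[OF 3(2) l[OF sLo] tl[OF sLo] c t0])
    next
      case 4
      hence sUp: "s \<in> Up" using s Up_def by auto
      show ?thesis by (rule term_below_threshold_high[OF 4(2) u[OF sUp] tu[OF sUp] 4(1) t0])
    qed
  qed
  have "qlt (\<Sum>s\<in>S. d s * t ^ e s) (c * t ^ a)" by (rule qlt_sum[OF S ct each])
  thus False using H[OF t0] by (simp add: qlt_not_qle)
qed

end

section \<open>Evaluation of polynomials\<close>

definition monom_eval :: "('n::finite \<Rightarrow>\<^sub>0 nat) \<Rightarrow> ('n \<Rightarrow> 'a::comm_semiring_1) \<Rightarrow> 'a" where
  "monom_eval m x = (\<Prod>i\<in>UNIV. x i ^ lookup m i)"

lemma mpeval_monom_eval: "mpeval P x = (\<Sum>m\<in>keys P. lookup P m * monom_eval m x)"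
  by (simp add: mpeval_def monom_eval_def)

lemma mpeval_superset:
  assumes "finite S" "keys P \<subseteq> S"
  shows "mpeval P x = (\<Sum>m\<in>S. lookup P m * monom_eval m x)"
  unfolding mpeval_monom_eval
  by (rule sum.mono_neutral_left[OF assms]) (simp add: in_keys_iff)

lemma mpeval_zero: "mpeval 0 x = 0"
  by (simp add: mpeval_def)

lemma mpeval_add: "mpeval (P + Q) x = mpeval P x + mpeval Q x"
proof -
  let ?S = "keys P \<union> keys Q"
  have "mpeval (P + Q) x = (\<Sum>m\<in>?S. lookup (P + Q) m * monom_eval m x)"
    by (rule mpeval_superset[OF _ keys_add]) simp
  also have "\<dots> = (\<Sum>m\<in>?S. lookup P m * monom_eval m x) + (\<Sum>m\<in>?S. lookup Q m * monom_eval m x)"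
    by (simp add: lookup_add distrib_right sum.distrib)
  also have "\<dots> = mpeval P x + mpeval Q x"
    using mpeval_superset[of ?S P x] mpeval_superset[of ?S Q x] by simp
  finally show ?thesis .
qed

lemma mpeval_sum: "mpeval (sum f S) x = (\<Sum>s\<in>S. mpeval (f s) x)"
  by (induction S rule: infinite_finite_induct) (simp_all add: mpeval_zero mpeval_add)

lemma mpeval_single: "mpeval (single m c) x = c * monom_eval m x"
  by (simp add: mpeval_monom_eval)

lemma sum_of_terms: "(\<Sum>m\<in>keys P. single m (lookup P m)) = P"
proof (rule poly_mapping_eqI)
  fix k
  have "lookup (\<Sum>m\<in>keys P. single m (lookup P m)) k = (\<Sum>m\<in>keys P. if m = k then lookup P m else 0)"
    by (simp add: lookup_sum lookup_single when_def eq_commute)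
  thus "lookup (\<Sum>m\<in>keys P. single m (lookup P m)) k = lookup P k"
    by (simp add: in_keys_iff)
qed

lemma monom_eval_add: "monom_eval (m + m') x = monom_eval m x * monom_eval m' x"
  by (simp add: monom_eval_def lookup_add power_add prod.distrib)

lemma mpeval_mult:
  fixes P Q :: "('n::finite \<Rightarrow>\<^sub>0 nat) \<Rightarrow>\<^sub>0 'a::comm_semiring_1"
  shows "mpeval (P * Q) x = mpeval P x * mpeval Q x"
proof -
  let ?t = "\<lambda>P::('n \<Rightarrow>\<^sub>0 nat) \<Rightarrow>\<^sub>0 'a. \<lambda>m. single m (lookup P m)"
  have "P * Q = (\<Sum>m\<in>keys P. \<Sum>m'\<in>keys Q. ?t P m * ?t Q m')"
    by (subst (1 2) sum_of_terms[symmetric]) (rule sum_product)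
  hence "mpeval (P * Q) x = (\<Sum>m\<in>keys P. \<Sum>m'\<in>keys Q. mpeval (?t P m * ?t Q m') x)"
    by (simp add: mpeval_sum)
  also have "\<dots> = (\<Sum>m\<in>keys P. \<Sum>m'\<in>keys Q.
                     (lookup P m * monom_eval m x) * (lookup Q m' * monom_eval m' x))"
    by (simp add: mult_single mpeval_single monom_eval_add ac_simps)
  also have "\<dots> = mpeval P x * mpeval Q x"
    by (simp add: mpeval_monom_eval sum_product)
  finally show ?thesis .
qed

lemma mpeval_one: "mpeval 1 x = 1"
  by (simp add: mpeval_monom_eval monom_eval_def)

lemma mpeval_power: "mpeval (P ^ n) x = mpeval P x ^ n"
  by (induction n) (simp_all add: mpeval_one mpeval_mult)

primrec exp_scale :: "nat \<Rightarrow> ('n \<Rightarrow>\<^sub>0 nat) \<Rightarrow> ('n \<Rightarrow>\<^sub>0 nat)" where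
  "exp_scale 0 m = 0"
| "exp_scale (Suc n) m = m + exp_scale n m"

lemma lookup_exp_scale: "lookup (exp_scale n m) k = n * lookup m k"
  by (induction n) (simp_all add: lookup_add)

lemma single_power:
  "(single m c :: ('n \<Rightarrow>\<^sub>0 nat) \<Rightarrow>\<^sub>0 'a::comm_semiring_1) ^ n = single (exp_scale n m) (c ^ n)"
  by (induction n) (simp_all add: mult_single)

lemma monom_eval_exp_scale: "monom_eval (exp_scale n m) x = monom_eval m x ^ n"
  unfolding monom_eval_def lookup_exp_scale prod_power_distrib
  by (rule prod.cong) (simp_all add: mult.commute[of n] power_mult)

lemma monom_eval_split:
  "monom_eval m x = x i ^ lookup m i * (\<Prod>j\<in>UNIV - {i}. x j ^ lookup m j)"
  unfolding monom_eval_def by (rule prod.remove) auto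

lemma monom_eval_upd:
  "monom_eval m (x(i := t)) = t ^ lookup m i * monom_eval m (x(i := 1))"
proof -
  have "(\<Prod>j\<in>UNIV - {i}. (x(i := t)) j ^ lookup m j) = (\<Prod>j\<in>UNIV - {i}. (x(i := 1)) j ^ lookup m j)"
    by (rule prod.cong) auto
  thus ?thesis by (simp add: monom_eval_split[of m _ i])
qed

lemma mpeval_upd:
  "mpeval P (x(i := t)) = (\<Sum>m\<in>keys P. (lookup P m * monom_eval m (x(i := 1))) * t ^ lookup m i)"
  unfolding mpeval_monom_eval by (rule sum.cong) (simp_all add: monom_eval_upd[of _ x i t] ac_simps)

section \<open>Polynomial functions are determined by their values on the torus\<close>

definition on_torus :: "('n \<Rightarrow> 'a::zero) \<Rightarrow> bool" where
  "on_torus x \<longleftrightarrow> (\<forall>i. x i \<noteq> 0)"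

context ordered_quasi_field begin

lemma monom_eval_nonzero: "on_torus x \<Longrightarrow> monom_eval m (x::'n::finite \<Rightarrow> 'a) \<noteq> 0"
  unfolding monom_eval_def on_torus_def by (rule prod_nonzero) (auto simp: power_nonzero)

text \<open>A nonzero polynomial does not vanish on the torus, since sums of nonzero elements are
  nonzero.  In particular the polynomial ring has no zero divisors.\<close>

lemma mpeval_nonzero:
  assumes x: "on_torus x" and P: "P \<noteq> 0"
  shows "mpeval P (x::'n::finite \<Rightarrow> 'a) \<noteq> 0"
proof -
  obtain m where m: "m \<in> keys P" using P by fastforce
  hence "lookup P m * monom_eval m x \<noteq> 0"
    using monom_eval_nonzero[OF x] by (simp add: in_keys_iff mult_eq_0_iff)
  thus ?thesis unfolding mpeval_monom_eval by (rule sum_nonzero[OF finite_keys m])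
qed

lemma poly_mult_nonzero:
  fixes R1 R2 :: "('n::finite \<Rightarrow>\<^sub>0 nat) \<Rightarrow>\<^sub>0 'a"
  assumes "R1 \<noteq> 0" "R2 \<noteq> 0"
  shows "R1 * R2 \<noteq> 0"
proof -
  have torus: "on_torus (\<lambda>_::'n. 1::'a)" by (simp add: on_torus_def)
  have "mpeval (R1 * R2) (\<lambda>_. 1) \<noteq> 0"
    using mpeval_nonzero[OF torus assms(1)] mpeval_nonzero[OF torus assms(2)]
    by (simp add: mpeval_mult mult_eq_0_iff)
  thus ?thesis by (auto simp: mpeval_zero)
qed

end

context closed_quasi_field begin

lemma small_scalar:
  assumes A: "(A::'a) \<noteq> 0"
  obtains t where "t \<noteq> 0" "qle t 1" "qlt (t * B) A"
proof -
  obtain w where w: "(A + B) * w = 1"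
    using inverse_exists[of "A + B"] A by (auto simp: add_eq_0_iff)
  obtain s where s: "s \<noteq> 0" "qlt s 1" using exists_qlt_one by blast
  define r where "r = A * w"
  have r0: "r \<noteq> 0" using A w by (auto simp: r_def mult_eq_0_iff)
  have r1: "qle r 1" unfolding r_def using qle_mult[OF qle_addL[of A B], of w] w by simp
  have rB: "qle (r * B) A"
  proof -
    have "qle (B * r) ((A + B) * r)" by (rule qle_mult[OF qle_addR])
    moreover have "(A + B) * r = A * ((A + B) * w)" by (simp add: r_def ac_simps)
    ultimately show ?thesis using w by (simp add: mult.commute)
  qed
  have "qlt (s * (r * B)) A"
  proof (cases "r * B = 0")
    case True then show ?thesis using zero_qlt[OF A] by simp
  next
    case False then show ?thesis using qlt_mult2[OF s(2) rB False] by simp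
  qed
  moreover have "qle (r * s) (1 * 1)" using qle_mult2[OF r1 qlt_imp_qle[OF s(2)]] .
  ultimately show ?thesis using that[of "r * s"] r0 s(1) by (simp add: mult_eq_0_iff ac_simps)
qed

lemma monom_eval_shrink:
  assumes t1: "qle t 1" and i0: "x i0 = 0" "lookup q i0 \<noteq> 0"
  shows "qle (monom_eval q (\<lambda>i. if x i = 0 then t else x i))
             (t * monom_eval q (\<lambda>i. if x i = 0 then 1 else (x i :: 'a)))"
proof -
  define k where "k = lookup q i0"
  have tk: "qle (t ^ k) t"
  proof -
    have "qle (t ^ (k - 1) * t) (1 * t)" using qle_mult[OF qle_power[OF t1, of "k - 1"]] by simp
    moreover have "t ^ (k - 1) * t = t ^ k" using i0(2) unfolding k_def by (metis Suc_diff_1 not_gr_zero power_Suc2)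
    ultimately show ?thesis by simp
  qed
  have "qle (\<Prod>i\<in>UNIV - {i0}. (if x i = 0 then t else x i) ^ lookup q i)
            (\<Prod>i\<in>UNIV - {i0}. (if x i = 0 then 1 else x i) ^ lookup q i)"
    by (rule qle_prod_mono, rule qle_power) (auto simp: t1 qle_refl)
  from qle_mult2[OF tk this] show ?thesis
    using i0 by (simp add: monom_eval_split[of q _ i0] k_def mult.assoc)
qed

lemma term_shrink:
  fixes Q :: "('n::finite \<Rightarrow>\<^sub>0 nat) \<Rightarrow>\<^sub>0 'a"
  assumes t1: "qle t 1" and q: "q \<in> keys Q" and i0: "x i0 = 0" "lookup q i0 \<noteq> 0"
  shows "qle (lookup Q q * monom_eval q (\<lambda>i. if x i = 0 then t else x i))
             (t * mpeval Q (\<lambda>i. if x i = 0 then 1 else x i))"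
proof -
  let ?y = "\<lambda>i. if x i = 0 then t else x i" and ?z = "\<lambda>i. if x i = 0 then 1 else x i"
  have "qle (monom_eval q ?y * lookup Q q) (t * monom_eval q ?z * lookup Q q)"
    using monom_eval_shrink[of t x i0 q, OF t1 i0] by (rule qle_mult)
  moreover have "qle (lookup Q q * monom_eval q ?z * t) (mpeval Q ?z * t)"
    unfolding mpeval_monom_eval by (rule qle_mult[OF qle_sum_member[OF finite_keys q]])
  ultimately show ?thesis by (metis (no_types, lifting) qle_trans mult.commute mult.left_commute)
qed

text \<open>If \<open>Q(x) < P(x)\<close>, move the zero coordinates of \<open>x\<close> to a small \<open>t\<close>: the leading
  term of \<open>P(x)\<close> involves none of them and keeps its value, while the terms of \<open>Q\<close> either keep
  their value or become smaller than \<open>P(x)\<close>.\<close>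

lemma torus_extension:
  fixes P Q :: "('n::finite \<Rightarrow>\<^sub>0 nat) \<Rightarrow>\<^sub>0 'a"
  assumes le: "\<And>y. on_torus y \<Longrightarrow> qle (mpeval P y) (mpeval Q y)"
  shows "qle (mpeval P x) (mpeval Q x)"
proof (rule ccontr)
  define A where "A = mpeval P x"
  assume "\<not> qle (mpeval P x) (mpeval Q x)"
  hence lt: "qlt (mpeval Q x) A" by (simp add: A_def qlt_not_qle)
  hence A0: "A \<noteq> 0" using qle_0_iff qlt_def by auto
  obtain m where m: "m \<in> keys P" and Am: "qle A (lookup P m * monom_eval m x)"
    using qle_sum_witness[OF finite_keys A0, of "\<lambda>m. lookup P m * monom_eval m x"] qle_refl[of A]
    unfolding A_def mpeval_monom_eval by blast
  define z where "z = (\<lambda>i. if x i = 0 then 1 else x i)"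
  obtain t where t0: "t \<noteq> 0" and t1: "qle t 1" and tB: "qlt (t * mpeval Q z) A"
    using small_scalar[OF A0] by blast
  define y where "y = (\<lambda>i. if x i = 0 then t else x i)"
  have keep: "monom_eval q y = monom_eval q x" if "\<forall>i. x i = 0 \<longrightarrow> lookup q i = 0" for q
    unfolding monom_eval_def by (rule prod.cong) (auto simp: y_def that)
  have "\<forall>i. x i = 0 \<longrightarrow> lookup m i = 0"
  proof (rule ccontr)
    assume "\<not> (\<forall>i. x i = 0 \<longrightarrow> lookup m i = 0)"
    then obtain i where "x i = 0" "lookup m i \<noteq> 0" by blast
    hence "monom_eval m x = 0" by (simp add: monom_eval_split[of m x i] zero_power)
    thus False using Am A0 by (simp add: qle_0_iff)
  qed
  hence "qle A (lookup P m * monom_eval m y)" using Am keep by simp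
  hence AP: "qle A (mpeval P y)"
    unfolding mpeval_monom_eval by (rule qle_trans[OF _ qle_sum_member[OF finite_keys m]])
  have "qlt (lookup Q q * monom_eval q y) A" if q: "q \<in> keys Q" for q
  proof (cases "\<forall>i. x i = 0 \<longrightarrow> lookup q i = 0")
    case True
    have "qle (lookup Q q * monom_eval q x) (mpeval Q x)"
      unfolding mpeval_monom_eval by (rule qle_sum_member[OF finite_keys q])
    thus ?thesis using qle_qlt_trans[OF _ lt] keep[OF True] by simp
  next
    case False
    then obtain i0 where i0: "x i0 = 0" "lookup q i0 \<noteq> 0" by blast
    from term_shrink[of t q Q x i0, OF t1 q i0] show ?thesis
      unfolding y_def z_def using qle_qlt_trans[OF _ tB[unfolded z_def]] by blast
  qed
  hence "qlt (mpeval Q y) A"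
    unfolding mpeval_monom_eval by (rule qlt_sum[OF finite_keys A0])
  moreover have "on_torus y" using t0 by (simp add: y_def on_torus_def)
  ultimately show False using AP le qle_trans qlt_not_qle by blast
qed

corollary torus_determines:
  fixes P Q :: "('n::finite \<Rightarrow>\<^sub>0 nat) \<Rightarrow>\<^sub>0 'a"
  assumes "\<And>y. on_torus y \<Longrightarrow> mpeval P y = mpeval Q y"
  shows "mpeval P = mpeval Q"
proof
  fix x
  show "mpeval P x = mpeval Q x"
    using torus_extension[of P Q x] torus_extension[of Q P x] assms
    by (simp add: qle_refl qle_antisym)
qed

end

section \<open>Domination of a monomial by a polynomial\<close>

text \<open>Eliminating one variable \<open>X\<^sub>i\<close>: given a polynomial \<open>P\<close>, a target exponent \<open>al\<close> of \<open>X\<^sub>i\<close> and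
  a common multiple \<open>L\<close> of the gaps between \<open>X\<^sub>i\<close>-exponents of \<open>P\<close>, the polynomial collects the
  \<open>L\<close>-th powers of the terms of \<open>P\<close> with \<open>X\<^sub>i\<close>-exponent \<open>al\<close> and, for each pair of terms with
  \<open>X\<^sub>i\<close>-exponents on both sides of \<open>al\<close>, the product of powers of them whose \<open>X\<^sub>i\<close>-exponent is
  exactly \<open>L al\<close>.  All its terms have \<open>X\<^sub>i\<close>-exponent \<open>L al\<close>, and it is a part of \<open>P\<^sup>L\<close>.\<close>

definition interp_poly ::
    "nat \<Rightarrow> 'n \<Rightarrow> nat \<Rightarrow> (('n \<Rightarrow>\<^sub>0 nat) \<Rightarrow>\<^sub>0 'a::comm_semiring_1) \<Rightarrow> ('n \<Rightarrow>\<^sub>0 nat) \<Rightarrow>\<^sub>0 'a" where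
  "interp_poly L i al P =
     (\<Sum>m\<in>{m\<in>keys P. lookup m i = al}. single m (lookup P m) ^ L) +
     (\<Sum>(m, m')\<in>{(m, m'). m \<in> keys P \<and> m' \<in> keys P \<and> lookup m i < al \<and> al < lookup m' i}.
        (single m (lookup P m) ^ (lookup m' i - al) * single m' (lookup P m') ^ (al - lookup m i))
          ^ (L div (lookup m' i - lookup m i)))"

text \<open>\<open>L\<close> is a common multiple of the differences of \<open>X\<^sub>i\<close>-exponents of terms of \<open>P\<close>; then the
  exponents of the pair terms of \<open>interp_poly\<close> are integral.\<close>

definition gaps_divide :: "nat \<Rightarrow> 'n \<Rightarrow> (('n \<Rightarrow>\<^sub>0 nat) \<Rightarrow>\<^sub>0 'a::zero) \<Rightarrow> bool" where
  "gaps_divide L i P \<longleftrightarrow>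
     (\<forall>m\<in>keys P. \<forall>m'\<in>keys P. lookup m i < lookup m' i \<longrightarrow> (lookup m' i - lookup m i) dvd L)"

lemma gaps_divide_fact:
  "gaps_divide (fact (Max ((\<lambda>m. lookup m i) ` keys P))) i P"
  unfolding gaps_divide_def
proof (intro ballI impI dvd_fact)
  fix m m' assume m': "m' \<in> keys P" and lt: "lookup m i < lookup m' i"
  show "1 \<le> lookup m' i - lookup m i" using lt by simp
  have "lookup m' i - lookup m i \<le> lookup m' i" by simp
  also have "\<dots> \<le> Max ((\<lambda>m. lookup m i) ` keys P)" using m' by (intro Max_ge) auto
  finally show "lookup m' i - lookup m i \<le> Max ((\<lambda>m. lookup m i) ` keys P)" .
qed

lemma finite_interp_pairs:
  "finite {(m, m'). m \<in> keys P \<and> m' \<in> keys P \<and> lookup m i < al \<and> al < lookup m' i}"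
  by (rule finite_subset[of _ "keys P \<times> keys P"]) auto

lemma interpolate_exponents:
  assumes "e < (a::nat)" "a < e'"
  shows "(e' - a) * e + (a - e) * e' = a * (e' - e)"
proof -
  obtain p where "e' = a + p" using assms(2) less_imp_add_positive by blast
  moreover obtain q where "a = e + q" using assms(1) less_imp_add_positive by blast
  ultimately show ?thesis by (simp add: algebra_simps)
qed

text \<open>Each term of \<open>interp_poly L i al P\<close> is a product of \<open>L\<close> terms of \<open>P\<close>, so it is coefficientwise
  below \<open>P\<^sup>L\<close>.\<close>

lemma interp_poly_qle_power:
  fixes P :: "('n \<Rightarrow>\<^sub>0 nat) \<Rightarrow>\<^sub>0 'a::comm_semiring_1"
  assumes "idempotent_semiring TYPE('a)" and div: "gaps_divide L i P"
  shows "qle (interp_poly L i al P) (P ^ L)"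
proof -
  interpret idempotent_semiring "TYPE(('n \<Rightarrow>\<^sub>0 nat) \<Rightarrow>\<^sub>0 'a)"
    by (rule idempotent_semiring.poly_mapping_idempotent[OF assms(1)])
  have single_le: "qle (single m (lookup P m)) P" for m
    by (rule idempotent_semiring.single_qle_poly[OF assms(1)])
  have "qle ((single m (lookup P m) ^ (e' - al) * single m' (lookup P m') ^ (al - e))
               ^ (L div (e' - e))) (P ^ L)"
    if "m \<in> keys P" "m' \<in> keys P" "e = lookup m i" "e' = lookup m' i" "e < al" "al < e'"
    for m m' e e'
  proof -
    have "(e' - e) dvd L" using div that unfolding gaps_divide_def by auto
    hence "(P ^ (e' - al) * P ^ (al - e)) ^ (L div (e' - e)) = P ^ L"
      using that by (simp flip: power_add power_mult)
    thus ?thesis by (metis qle_mult2 qle_power single_le)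
  qed
  thus ?thesis unfolding interp_poly_def
    by (intro qle_add_bound qle_sum_bound finite_interp_pairs)
      (auto intro: qle_power single_le)
qed

lemma keys_interp_poly_cases:
  fixes P :: "('n \<Rightarrow>\<^sub>0 nat) \<Rightarrow>\<^sub>0 'a::comm_semiring_1"
  assumes "k \<in> keys (interp_poly L i al P)"
  shows "(\<exists>m\<in>keys P. lookup m i = al \<and> k = exp_scale L m) \<or>
         (\<exists>m\<in>keys P. \<exists>m'\<in>keys P. lookup m i < al \<and> al < lookup m' i \<and>
            k = exp_scale (L div (lookup m' i - lookup m i))
                  (exp_scale (lookup m' i - al) m + exp_scale (al - lookup m i) m'))"
proof -
  have power_keys: "keys (single m c ^ L) \<subseteq> {exp_scale L m}" for m and c :: 'a
    by (simp add: single_power)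
  have pair_keys: "keys ((single m c ^ p * single m' c' ^ q) ^ r)
                     \<subseteq> {exp_scale r (exp_scale p m + exp_scale q m')}" for m m' p q r and c c' :: 'a
    by (simp add: single_power mult_single)
  define t1 where "t1 m = single m (lookup P m) ^ L" for m
  define t2 where "t2 = (\<lambda>(m, m'). (single m (lookup P m) ^ (lookup m' i - al) *
                       single m' (lookup P m') ^ (al - lookup m i)) ^ (L div (lookup m' i - lookup m i)))"
  define Pr where "Pr = {(m, m'). m \<in> keys P \<and> m' \<in> keys P \<and> lookup m i < al \<and> al < lookup m' i}"
  define Eq where "Eq = {m\<in>keys P. lookup m i = al}"
  have "interp_poly L i al P = sum t1 Eq + sum t2 Pr"
    unfolding interp_poly_def t1_def t2_def Pr_def Eq_def by (rule refl)
  hence "k \<in> keys (sum t1 Eq) \<union> keys (sum t2 Pr)"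
    using assms keys_add[of "sum t1 Eq" "sum t2 Pr"] by auto
  hence "(\<exists>m\<in>Eq. k \<in> keys (t1 m)) \<or> (\<exists>mm\<in>Pr. k \<in> keys (t2 mm))"
    using keys_sum[of t1 Eq] keys_sum[of t2 Pr] by blast
  then consider m where "m \<in> keys P" "lookup m i = al" "k \<in> keys (single m (lookup P m) ^ L)"
    | m m' where "m \<in> keys P" "m' \<in> keys P" "lookup m i < al" "al < lookup m' i"
        "k \<in> keys ((single m (lookup P m) ^ (lookup m' i - al) * single m' (lookup P m') ^ (al - lookup m i))
                  ^ (L div (lookup m' i - lookup m i)))"
    unfolding t1_def t2_def Pr_def Eq_def by fast
  then show ?thesis
  proof cases
    case 1 thus ?thesis using power_keys by blast
  next
    case 2 thus ?thesis using pair_keys by blast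
  qed
qed

lemma lookup_keys_interp_poly:
  assumes div: "gaps_divide L i P" and k: "k \<in> keys (interp_poly L i al P)"
  shows "lookup k i = L * al"
    and "(\<And>m. m \<in> keys P \<Longrightarrow> lookup m j = b) \<Longrightarrow> lookup k j = L * b"
proof -
  from keys_interp_poly_cases[OF k]
  have "lookup k i = L * al \<and> ((\<forall>m\<in>keys P. lookup m j = b) \<longrightarrow> lookup k j = L * b)"
  proof (elim disjE bexE conjE)
    fix m assume "m \<in> keys P" "lookup m i = al" "k = exp_scale L m"
    thus ?thesis by (simp add: lookup_exp_scale)
  next
    fix m m' assume m: "m \<in> keys P" "m' \<in> keys P" and e: "lookup m i < al" "al < lookup m' i"
      and kk: "k = exp_scale (L div (lookup m' i - lookup m i))
                  (exp_scale (lookup m' i - al) m + exp_scale (al - lookup m i) m')"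
    define r where "r = L div (lookup m' i - lookup m i)"
    have r: "r * (lookup m' i - lookup m i) = L"
      using div m e unfolding gaps_divide_def r_def by auto
    have lk: "lookup k j' = r * ((lookup m' i - al) * lookup m j' + (al - lookup m i) * lookup m' j')"
      for j'
      by (simp add: kk r_def lookup_exp_scale lookup_add)
    have "lookup k i = r * (al * (lookup m' i - lookup m i))"
      using interpolate_exponents[OF e] by (simp add: lk mult.commute)
    hence "lookup k i = L * al" using r by (simp add: ac_simps)
    moreover have "lookup k j = L * b" if "\<forall>m\<in>keys P. lookup m j = b"
    proof -
      have "lookup k j = r * ((lookup m' i - al) + (al - lookup m i)) * b"
        using that m by (simp add: lk algebra_simps)
      also have "\<dots> = L * b" using e r by simp
      finally show ?thesis .
    qed
    ultimately show ?thesis by blast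
  qed
  thus "lookup k i = L * al" "(\<And>m. m \<in> keys P \<Longrightarrow> lookup m j = b) \<Longrightarrow> lookup k j = L * b"
    by auto
qed

lemma (in idempotent_semiring) interpolation_term_bound:
  assumes e: "e < a" "a < e'" and le: "qle (c ^ (e' - e)) (d ^ (e' - a) * d' ^ (a - e))"
    and r: "(e' - e) * r = L"
  shows "qle (((c::'a) * s ^ a) ^ L) (((d * s ^ e) ^ (e' - a) * (d' * s ^ e') ^ (a - e)) ^ r)"
proof -
  have "(d * s ^ e) ^ (e' - a) * (d' * s ^ e') ^ (a - e)
      = d ^ (e' - a) * d' ^ (a - e) * s ^ ((e' - a) * e + (a - e) * e')"
    by (simp add: power_mult_distrib power_add power_mult[symmetric] ac_simps)
  hence "((d * s ^ e) ^ (e' - a) * (d' * s ^ e') ^ (a - e)) ^ r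
      = (d ^ (e' - a) * d' ^ (a - e)) ^ r * s ^ (r * ((e' - a) * e + (a - e) * e'))"
    by (simp add: power_mult_distrib power_mult[symmetric] mult.commute)
  also have "r * ((e' - a) * e + (a - e) * e') = a * L"
    using interpolate_exponents[OF e] r by (simp add: ac_simps)
  finally have rhs: "((d * s ^ e) ^ (e' - a) * (d' * s ^ e') ^ (a - e)) ^ r
      = (d ^ (e' - a) * d' ^ (a - e)) ^ r * s ^ (a * L)" .
  have "(c * s ^ a) ^ L = (c ^ (e' - e)) ^ r * s ^ (a * L)"
    using r by (simp add: power_mult_distrib power_mult[symmetric] mult.commute)
  thus ?thesis unfolding rhs by (simp add: qle_mult qle_power[OF le])
qed

lemma (in idempotent_semiring) mpeval_interp_poly_bounds:
  fixes P :: "('n::finite \<Rightarrow>\<^sub>0 nat) \<Rightarrow>\<^sub>0 'a"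
  shows "m \<in> keys P \<Longrightarrow> lookup m i = al \<Longrightarrow>
           qle ((lookup P m * monom_eval m x) ^ L) (mpeval (interp_poly L i al P) x)"
    and "m \<in> keys P \<Longrightarrow> m' \<in> keys P \<Longrightarrow> lookup m i < al \<Longrightarrow> al < lookup m' i \<Longrightarrow>
           qle (((lookup P m * monom_eval m x) ^ (lookup m' i - al) *
                 (lookup P m' * monom_eval m' x) ^ (al - lookup m i)) ^ (L div (lookup m' i - lookup m i)))
               (mpeval (interp_poly L i al P) x)"
proof -
  define t1 where "t1 m = single m (lookup P m) ^ L" for m
  define t2 where "t2 = (\<lambda>(m, m'). (single m (lookup P m) ^ (lookup m' i - al) *
                       single m' (lookup P m') ^ (al - lookup m i)) ^ (L div (lookup m' i - lookup m i)))"
  define Eq where "Eq = {m\<in>keys P. lookup m i = al}"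
  define Pr where "Pr = {(m, m'). m \<in> keys P \<and> m' \<in> keys P \<and> lookup m i < al \<and> al < lookup m' i}"
  have interp_value:
    "mpeval (interp_poly L i al P) x = (\<Sum>m\<in>Eq. mpeval (t1 m) x) + (\<Sum>mm\<in>Pr. mpeval (t2 mm) x)"
    unfolding interp_poly_def t1_def t2_def Pr_def Eq_def by (simp add: mpeval_add mpeval_sum)
  show "qle ((lookup P m * monom_eval m x) ^ L) (mpeval (interp_poly L i al P) x)"
    if "m \<in> keys P" "lookup m i = al"
  proof -
    have "qle (mpeval (t1 m) x) (\<Sum>m\<in>Eq. mpeval (t1 m) x)"
      using that by (intro qle_sum_member) (simp_all add: Eq_def)
    thus ?thesis unfolding interp_value
      by (simp add: t1_def mpeval_power mpeval_single qle_trans[OF _ qle_addL])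
  qed
  show "qle (((lookup P m * monom_eval m x) ^ (lookup m' i - al) *
               (lookup P m' * monom_eval m' x) ^ (al - lookup m i)) ^ (L div (lookup m' i - lookup m i)))
             (mpeval (interp_poly L i al P) x)"
    if "m \<in> keys P" "m' \<in> keys P" "lookup m i < al" "al < lookup m' i"
  proof -
    have "qle (mpeval (t2 (m, m')) x) (\<Sum>mm\<in>Pr. mpeval (t2 mm) x)"
      using that by (intro qle_sum_member) (simp_all add: Pr_def finite_interp_pairs)
    thus ?thesis unfolding interp_value
      by (simp add: t2_def mpeval_power mpeval_mult mpeval_single qle_trans[OF _ qle_addR])
  qed
qed

context closed_quasi_field begin

text \<open>If \<open>c X\<^sup>a\<close> is dominated by \<open>P\<close> on the torus, then \<open>(c X\<^sup>a)\<^sup>L\<close> is dominated by the interpolation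
  polynomial eliminating \<open>X\<^sub>i\<close>: apply the one-variable domination lemma to the restriction of \<open>P\<close>
  to the line through \<open>x\<close> parallel to the \<open>X\<^sub>i\<close>-axis.\<close>

lemma interp_poly_dominates:
  fixes P :: "('n::finite \<Rightarrow>\<^sub>0 nat) \<Rightarrow>\<^sub>0 'a"
  assumes div: "gaps_divide L i P" and c: "c \<noteq> 0"
    and dom: "\<And>y. on_torus y \<Longrightarrow> qle (c * monom_eval a y) (mpeval P y)"
    and x: "on_torus x"
  shows "qle (c ^ L * monom_eval (exp_scale L a) x) (mpeval (interp_poly L i (lookup a i) P) x)"
proof -
  define al where "al = lookup a i"
  define x1 where "x1 = x(i := 1)"
  define c' where "c' = c * monom_eval a x1"
  define d where "d m = lookup P m * monom_eval m x1" for m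
  have term_value: "lookup P m * monom_eval m x = d m * x i ^ lookup m i" for m
    using monom_eval_upd[of m x i "x i"] by (simp add: d_def x1_def ac_simps)
  have c'0: "c' \<noteq> 0"
    using c x monom_eval_nonzero[of x1 a] by (simp add: c'_def x1_def on_torus_def mult_eq_0_iff)
  have lhs: "c ^ L * monom_eval (exp_scale L a) x = (c' * x i ^ al) ^ L"
    using monom_eval_upd[of a x i "x i"]
    by (simp add: monom_eval_exp_scale c'_def al_def x1_def power_mult_distrib ac_simps)
  have restricted: "qle (c' * t ^ al) (\<Sum>m\<in>keys P. d m * t ^ lookup m i)" if t: "t \<noteq> 0" for t
  proof -
    have "on_torus (x(i := t))" using x t by (simp add: on_torus_def)
    from dom[OF this] show ?thesis
      by (simp add: mpeval_upd monom_eval_upd[of a x i t] c'_def d_def al_def x1_def ac_simps)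
  qed
  have "(\<exists>m\<in>keys P. lookup m i = al \<and> qle c' (d m)) \<or>
        (\<exists>m\<in>keys P. \<exists>m'\<in>keys P. lookup m i < al \<and> al < lookup m' i \<and>
           qle (c' ^ (lookup m' i - lookup m i)) (d m ^ (lookup m' i - al) * d m' ^ (al - lookup m i)))"
    by (rule one_variable_domination[OF finite_keys c'0]) (rule restricted)
  then have "qle ((c' * x i ^ al) ^ L) (mpeval (interp_poly L i al P) x)"
  proof (elim disjE bexE conjE)
    fix m assume m: "m \<in> keys P" "lookup m i = al" "qle c' (d m)"
    have "qle ((c' * x i ^ al) ^ L) ((d m * x i ^ lookup m i) ^ L)"
      using m(2) by (simp add: qle_power qle_mult m(3))
    thus ?thesis
      using mpeval_interp_poly_bounds(1)[OF m(1,2), of x L] term_value qle_trans by metis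
  next
    fix m m' assume m: "m \<in> keys P" "m' \<in> keys P" and e: "lookup m i < al" "al < lookup m' i"
      and le: "qle (c' ^ (lookup m' i - lookup m i)) (d m ^ (lookup m' i - al) * d m' ^ (al - lookup m i))"
    have "(lookup m' i - lookup m i) * (L div (lookup m' i - lookup m i)) = L"
      using div m e unfolding gaps_divide_def by auto
    from interpolation_term_bound[OF e le this, of "x i"] show ?thesis
      using mpeval_interp_poly_bounds(2)[OF m e, of x L] term_value qle_trans by metis
  qed
  thus ?thesis by (simp add: lhs al_def)
qed

text \<open>If \<open>P\<close> consists of the single term \<open>p X\<^sup>a\<close> and dominates \<open>c X\<^sup>a\<close> on the torus, then \<open>c \<le> p\<close>
  (evaluate at \<open>(1, \<dots>, 1)\<close>).\<close>

lemma dominated_by_single_term: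
  fixes P :: "('n::finite \<Rightarrow>\<^sub>0 nat) \<Rightarrow>\<^sub>0 'a"
  assumes keys: "keys P \<subseteq> {a}"
    and dom: "\<And>y. on_torus y \<Longrightarrow> qle (c * monom_eval a y) (mpeval P y)"
  shows "qle (single a c) P"
proof -
  have P: "P = single a (lookup P a)"
    using keys by (intro poly_mapping_eqI) (auto simp: lookup_single when_def in_keys_iff)
  have "on_torus (\<lambda>_::'n. 1::'a)" by (simp add: on_torus_def)
  from dom[OF this] have "qle c (lookup P a)"
    by (subst (asm) P) (simp add: mpeval_single monom_eval_def)
  thus ?thesis using P single_qle_single by metis
qed

text \<open>The proof eliminates the variables one at a
  time: by induction on the set \<open>V\<close> of variables in which the exponents of \<open>P\<close> may differ from
  \<open>a\<close>, replacing \<open>P\<close> by an interpolation polynomial, which is part of a power of \<open>P\<close>.\<close>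

lemma monomial_domination_on_vars:
  fixes P :: "('n::finite \<Rightarrow>\<^sub>0 nat) \<Rightarrow>\<^sub>0 'a"
  assumes "finite V"
    and "\<And>m j. m \<in> keys P \<Longrightarrow> j \<notin> V \<Longrightarrow> lookup m j = lookup a j"
    and "c \<noteq> 0"
    and "\<And>y. on_torus y \<Longrightarrow> qle (c * monom_eval a y) (mpeval P y)"
  shows "\<exists>N>0. qle (single a c ^ N) (P ^ N)"
  using assms
proof (induction V arbitrary: P a c rule: finite_induct)
  case empty
  have "keys P \<subseteq> {a}" using empty.prems(1) by (auto intro: poly_mapping_eqI)
  hence "qle (single a c) P" using empty.prems(3) by (rule dominated_by_single_term)
  thus ?case by (intro exI[of _ 1]) simp
next
  case (insert i V)
  interpret poly: idempotent_semiring "TYPE(('n \<Rightarrow>\<^sub>0 nat) \<Rightarrow>\<^sub>0 'a)"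
    by (rule poly_mapping_idempotent)
  define L :: nat where "L = fact (Max ((\<lambda>m. lookup m i) ` keys P))"
  define Q where "Q = interp_poly L i (lookup a i) P"
  have div: "gaps_divide L i P" unfolding L_def by (rule gaps_divide_fact)
  have "\<exists>N>0. qle (single (exp_scale L a) (c ^ L) ^ N) (Q ^ N)"
  proof (rule insert.IH)
    fix k j assume k: "k \<in> keys Q" and j: "j \<notin> V"
    show "lookup k j = lookup (exp_scale L a) j"
    proof (cases "j = i")
      case True then show ?thesis
        using lookup_keys_interp_poly(1)[OF div k[unfolded Q_def]] by (simp add: lookup_exp_scale)
    next
      case False then show ?thesis
        using lookup_keys_interp_poly(2)[OF div k[unfolded Q_def], of j "lookup a j"] insert.prems(1) j
        by (simp add: lookup_exp_scale)
    qed
  next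
    show "c ^ L \<noteq> 0" using insert.prems(2) by (rule power_nonzero)
  next
    fix y :: "'n \<Rightarrow> 'a" assume "on_torus y"
    thus "qle (c ^ L * monom_eval (exp_scale L a) y) (mpeval Q y)"
      unfolding Q_def using interp_poly_dominates[OF div insert.prems(2,3)] by blast
  qed
  then obtain N where N: "N > 0" "qle (single (exp_scale L a) (c ^ L) ^ N) (Q ^ N)" by blast
  have "single a c ^ (L * N) = single (exp_scale L a) (c ^ L) ^ N"
    by (simp add: power_mult single_power)
  moreover have "qle (Q ^ N) (P ^ (L * N))"
    using poly.qle_power[OF interp_poly_qle_power[OF idempotent_semiring_axioms div]]
    by (simp add: Q_def power_mult)
  ultimately have "qle (single a c ^ (L * N)) (P ^ (L * N))"
    using N(2) poly.qle_trans by metis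
  moreover have "L * N > 0" using N(1) by (simp add: L_def)
  ultimately show ?case by blast
qed

lemma monomial_domination:
  fixes P :: "('n::finite \<Rightarrow>\<^sub>0 nat) \<Rightarrow>\<^sub>0 'a"
  assumes "c \<noteq> 0" and "\<And>y. on_torus y \<Longrightarrow> qle (c * monom_eval a y) (mpeval P y)"
  shows "\<exists>N>0. qle (single a c ^ N) (P ^ N)"
  by (rule monomial_domination_on_vars[of UNIV]) (use assms in auto)

end

section \<open>The congruence defining \<open>K{X}\<close>\<close>

context ordered_quasi_field begin

text \<open>\<open>rat_equiv\<close> is a congruence for addition and, since the polynomial ring has no zero divisors,
  an equivalence relation.\<close>

lemma rat_equiv_refl: "rat_equiv P P"
  unfolding rat_equiv_def by (intro exI[of _ 1]) simp

lemma rat_equiv_sym: "rat_equiv P Q \<Longrightarrow> rat_equiv Q P"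
  unfolding rat_equiv_def by metis

lemma rat_equiv_trans:
  fixes P Q S :: "('n::finite \<Rightarrow>\<^sub>0 nat) \<Rightarrow>\<^sub>0 'a"
  assumes "rat_equiv P Q" "rat_equiv Q S"
  shows "rat_equiv P S"
proof -
  obtain R1 where R1: "R1 \<noteq> 0" "R1 * P = R1 * Q" using assms(1) unfolding rat_equiv_def by blast
  obtain R2 where R2: "R2 \<noteq> 0" "R2 * Q = R2 * S" using assms(2) unfolding rat_equiv_def by blast
  have "R1 * R2 * P = R2 * (R1 * P)" by (simp add: ac_simps)
  also have "\<dots> = R1 * (R2 * Q)" using R1(2) by (simp add: ac_simps)
  also have "\<dots> = R1 * R2 * S" using R2(2) by (simp add: ac_simps)
  finally show ?thesis
    unfolding rat_equiv_def using poly_mult_nonzero[OF R1(1) R2(1)] by blast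
qed

lemma rat_equiv_add: "rat_equiv P Q \<Longrightarrow> rat_equiv (P + S) (Q + S)"
  unfolding rat_equiv_def by (metis distrib_left)

end

context closed_quasi_field begin

text \<open>Well-definedness of evaluation on \<open>K{X}\<close>: \<open>R P = R Q\<close> forces \<open>P = Q\<close> on the torus, where \<open>R\<close>
  does not vanish, hence everywhere.\<close>

lemma rat_equiv_imp_mpeval_eq:
  fixes P Q :: "('n::finite \<Rightarrow>\<^sub>0 nat) \<Rightarrow>\<^sub>0 'a"
  assumes "rat_equiv P Q"
  shows "mpeval P = mpeval Q"
proof (rule torus_determines)
  obtain R where R: "R \<noteq> 0" "R * P = R * Q" using assms unfolding rat_equiv_def by blast
  fix y :: "'n \<Rightarrow> 'a" assume y: "on_torus y"
  have "mpeval P y * mpeval R y = mpeval Q y * mpeval R y"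
    using arg_cong[OF R(2), of "\<lambda>S. mpeval S y"] by (simp add: mpeval_mult mult.commute)
  thus "mpeval P y = mpeval Q y" by (rule mult_right_cancel[OF mpeval_nonzero[OF y R(1)]])
qed

text \<open>A term dominated by \<open>P\<close> on the torus is absorbed by \<open>P\<close> in \<open>K{X}\<close>: with \<open>M\<^sup>N \<le> P\<^sup>N\<close>, the
  nonzero factor \<open>(P + M)\<^sup>N\<^sup>-\<^sup>1\<close> identifies \<open>P + M\<close> with \<open>P\<close>.\<close>

lemma dominated_term_absorbed:
  fixes P :: "('n::finite \<Rightarrow>\<^sub>0 nat) \<Rightarrow>\<^sub>0 'a"
  assumes dom: "\<And>y. on_torus y \<Longrightarrow> qle (c * monom_eval a y) (mpeval P y)"
  shows "rat_equiv (P + single a c) P"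
proof (cases "c = 0")
  case True then show ?thesis by (simp add: rat_equiv_refl)
next
  case False
  interpret poly: idempotent_semiring "TYPE(('n \<Rightarrow>\<^sub>0 nat) \<Rightarrow>\<^sub>0 'a)"
    by (rule poly_mapping_idempotent)
  obtain N where N: "N > 0" "qle (single a c ^ N) (P ^ N)"
    using monomial_domination[OF False dom] by blast
  then obtain k where k: "N = Suc k" using gr0_implies_Suc by blast
  have absorb: "(P + single a c) ^ k * (P + single a c) = (P + single a c) ^ k * P"
    using N(2) k by (intro poly.power_absorb) simp
  have "lookup (P + single a c) a \<noteq> 0" using False by (simp add: lookup_add add_eq_0_iff)
  hence "P + single a c \<noteq> 0" by auto
  hence "(P + single a c) ^ k \<noteq> 0"
    by (induction k) (simp_all add: poly_mult_nonzero)
  thus ?thesis using absorb unfolding rat_equiv_def by blast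
qed

lemma dominated_poly_absorbed:
  fixes P S :: "('n::finite \<Rightarrow>\<^sub>0 nat) \<Rightarrow>\<^sub>0 'a"
  assumes dom: "\<And>y. on_torus y \<Longrightarrow> qle (mpeval S y) (mpeval P y)"
  shows "rat_equiv (P + S) P"
proof -
  have term_dom: "qle (lookup S m * monom_eval m y) (mpeval P y)" if "m \<in> keys S" "on_torus y" for m y
    using qle_sum_member[OF finite_keys that(1)] dom[OF that(2)]
    unfolding mpeval_monom_eval by (rule qle_trans)
  have "rat_equiv (P + (\<Sum>m\<in>T. single m (lookup S m))) P" if "T \<subseteq> keys S" for T
    using finite_subset[OF that finite_keys] that
  proof (induction T rule: finite_induct)
    case empty then show ?case by (simp add: rat_equiv_refl)
  next
    case (insert m T)
    have "rat_equiv (P + (\<Sum>m\<in>T. single m (lookup S m)) + single m (lookup S m)) (P + single m (lookup S m))"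
      using insert by (intro rat_equiv_add) simp
    moreover have "rat_equiv (P + single m (lookup S m)) P"
      using insert.prems term_dom by (intro dominated_term_absorbed) auto
    moreover have "P + (\<Sum>m\<in>insert m T. single m (lookup S m))
                    = P + (\<Sum>m\<in>T. single m (lookup S m)) + single m (lookup S m)"
      using insert.hyps by (simp add: ac_simps)
    ultimately show ?case using rat_equiv_trans by metis
  qed
  thus ?thesis by (metis sum_of_terms order_refl)
qed

text \<open>Injectivity: polynomials with the same function are identified in \<open>K{X}\<close>, since each is
  absorbed by the other: \<open>P \<sim> P + Q = Q + P \<sim> Q\<close>.\<close>

lemma mpeval_eq_imp_rat_equiv:
  fixes P Q :: "('n::finite \<Rightarrow>\<^sub>0 nat) \<Rightarrow>\<^sub>0 'a"
  assumes "mpeval P = mpeval Q"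
  shows "rat_equiv P Q"
proof -
  have "rat_equiv (P + Q) P" "rat_equiv (Q + P) Q"
    using assms by (auto intro!: dominated_poly_absorbed simp: qle_refl)
  thus ?thesis by (metis add.commute rat_equiv_sym rat_equiv_trans)
qed

end

theorem theorem3p7:
  fixes K :: "'a::comm_semiring_1 itself"
  assumes "quasi_field_char1 K"
    and "totally_ordered_qf K"
    and "infinite (UNIV :: 'a set)"
    and "alg_closed_qf K"
  shows "(\<forall>P Q :: ('n::finite \<Rightarrow>\<^sub>0 nat) \<Rightarrow>\<^sub>0 'a. rat_equiv P Q \<longrightarrow> mpeval P = mpeval Q)
    \<and> (\<forall>P Q :: ('n \<Rightarrow>\<^sub>0 nat) \<Rightarrow>\<^sub>0 'a. mpeval P = mpeval Q \<longrightarrow> rat_equiv P Q)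
    \<and> (\<forall>P Q :: ('n \<Rightarrow>\<^sub>0 nat) \<Rightarrow>\<^sub>0 'a. mpeval (P + Q) = (\<lambda>x. mpeval P x + mpeval Q x))
    \<and> (\<forall>P Q :: ('n \<Rightarrow>\<^sub>0 nat) \<Rightarrow>\<^sub>0 'a. mpeval (P * Q) = (\<lambda>x. mpeval P x * mpeval Q x))
    \<and> mpeval (0 :: ('n \<Rightarrow>\<^sub>0 nat) \<Rightarrow>\<^sub>0 'a) = (\<lambda>x. 0)
    \<and> mpeval (1 :: ('n \<Rightarrow>\<^sub>0 nat) \<Rightarrow>\<^sub>0 'a) = (\<lambda>x. 1)"
proof -
  interpret closed_quasi_field K
    using assms unfolding quasi_field_char1_def totally_ordered_qf_def
    by unfold_locales auto
  show ?thesis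
  proof (intro conjI allI impI)
    fix P Q :: "('n \<Rightarrow>\<^sub>0 nat) \<Rightarrow>\<^sub>0 'a"
    show "rat_equiv P Q \<Longrightarrow> mpeval P = mpeval Q" by (rule rat_equiv_imp_mpeval_eq)
    show "mpeval P = mpeval Q \<Longrightarrow> rat_equiv P Q" by (rule mpeval_eq_imp_rat_equiv)
    show "mpeval (P + Q) = (\<lambda>x. mpeval P x + mpeval Q x)" by (simp add: fun_eq_iff mpeval_add)
    show "mpeval (P * Q) = (\<lambda>x. mpeval P x * mpeval Q x)" by (simp add: fun_eq_iff mpeval_mult)
  qed (simp_all add: fun_eq_iff mpeval_zero mpeval_one)
qed

end
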